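(* Let $\mathfrak L_1,\dots,\mathfrak L_n,\mathfrak L$ be complete lattices and let $(\mathcal F_\alpha)_{\alpha\in\mathcal O}$ be a family with $\mathcal F_\alpha:\mathfrak L_1\times\dots\times\mathfrak L_n\to(\mathfrak L\to^+\mathfrak L)$ which is $\limsup$-pushable in all arguments (i.e. the family of maps $(\vec{\mathcal G},\mathcal X)\mapsto\mathcal F_\alpha(\vec{\mathcal G})(\mathcal X)$ is $\limsup$-pushable). Then for every $\beta\in\mathcal O$ the family $\mathcal H_\alpha:\mathfrak L_1\times\dots\times\mathfrak L_n\to\mathfrak L$, $\mathcal H_\alpha(\vec{\mathcal G})=\nu^\beta(\mathcal F_\alpha(\vec{\mathcal G}))$, is $\limsup$-pushable.
   Context: $\mathcal O$ is the set of ordinals $\le\top_{\mathsf{ord}}$ for a fixed ordinal $\top_{\mathsf{ord}}$ ($=\beth_\omega$); $\lambda$ ranges over nonzero limit ordinals in $\mathcal O$. For a complete lattice $\mathfrak L$ and $f:\mathcal O\to\mathfrak L$: $\liminf_{\alpha\to\lambda}f(\alpha)=\sup_{\alpha_0<\lambda}\inf_{\alpha_0\le\alpha<\lambda}f(\alpha)$, $\limsup_{\alpha\to\lambda}f(\alpha)=\inf_{\alpha_0<\lambda}\sup_{\alpha_0\le\alpha<\lambda}f(\alpha)$; on products of lattices these are taken componentwise. $\mathfrak L\to^+\mathfrak L$ is the set of monotone maps. For $f:\mathfrak L\to\mathfrak L$ and $g\in\mathfrak L$, transfinite iteration: $f^0(g)=g$, $f^{\alpha+1}(g)=f(f^\alpha(g))$,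 $f^\lambda(g)=\limsup_{\alpha\to\lambda}f^\alpha(g)$; $\nu^\alpha f:=f^\alpha(\top)$, $\mu^\alpha f:=f^\alpha(\bot)$. A family $(\mathcal F_\alpha)_{\alpha\in\mathcal O}$ of maps $\mathfrak K\to\mathfrak K'$ between complete lattices is $\limsup$-pushable if for every $\mathcal G:\mathcal O\to\mathfrak K$ and every nonzero limit $\lambda$: $\limsup_{\alpha\to\lambda}\mathcal F_\gamma(\mathcal G_\alpha)\sqsubseteq\mathcal F_\gamma(\limsup_{\alpha\to\lambda}\mathcal G_\alpha)$ for all $\gamma\in\mathcal O$, and $\limsup_{\alpha\to\lambda}\mathcal F_\alpha(\mathcal G_\alpha)\sqsubseteq\mathcal F_\lambda(\limsup_{\alpha\to\lambda}\mathcal G_\alpha)$. *)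

theory Defs
  imports Main "HOL-Library.Product_Order"
begin

text \<open>Ordinals in O are modelled by the elements of an arbitrary well-ordered type 'o.\<close>

definition is_limit :: "'o::wellorder \<Rightarrow> bool" where
  "is_limit lam \<longleftrightarrow> (\<exists>a. a < lam) \<and> (\<forall>a. a < lam \<longrightarrow> (\<exists>c. a < c \<and> c < lam))"

definition limsup_at :: "('o::wellorder \<Rightarrow> 'a::complete_lattice) \<Rightarrow> 'o \<Rightarrow> 'a" where
  "limsup_at f lam = (INF a0\<in>{..<lam}. SUP a\<in>{a0..<lam}. f a)"

definition liminf_at :: "('o::wellorder \<Rightarrow> 'a::complete_lattice) \<Rightarrow> 'o \<Rightarrow> 'a" where
  "liminf_at f lam = (SUP a0\<in>{..<lam}. INF a\<in>{a0..<lam}. f a)"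

text \<open>Transfinite iteration: f^0 g = g, f^(a+1) g = f (f^a g), f^lam g = limsup.\<close>

definition iter :: "('a::complete_lattice \<Rightarrow> 'a) \<Rightarrow> 'a \<Rightarrow> 'o::wellorder \<Rightarrow> 'a" where
  "iter f g = wfrec {(x, y). x < y}
     (\<lambda>rec a. if \<not> (\<exists>b. b < a) then g
       else if (\<exists>b. b < a \<and> \<not> (\<exists>c. b < c \<and> c < a))
         then f (rec (THE b. b < a \<and> \<not> (\<exists>c. b < c \<and> c < a)))
       else limsup_at rec a)"

definition nu_iter :: "'o::wellorder \<Rightarrow> ('a::complete_lattice \<Rightarrow> 'a) \<Rightarrow> 'a" where
  "nu_iter b f = iter f top b"

definition mu_iter :: "'o::wellorder \<Rightarrow> ('a::complete_lattice \<Rightarrow> 'a) \<Rightarrow> 'a" where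
  "mu_iter b f = iter f bot b"

definition limsup_pushable :: "('o::wellorder \<Rightarrow> 'a::complete_lattice \<Rightarrow> 'b::complete_lattice) \<Rightarrow> bool" where
  "limsup_pushable F \<longleftrightarrow>
     (\<forall>G :: 'o \<Rightarrow> 'a. \<forall>lam. is_limit lam \<longrightarrow>
        (\<forall>c. limsup_at (\<lambda>a. F c (G a)) lam \<le> F c (limsup_at G lam)) \<and>
        limsup_at (\<lambda>a. F a (G a)) lam \<le> F lam (limsup_at G lam))"

end

theory Submission
  imports Defs
begin

text \<open>
  Fix a limit \<open>\<lambda>\<close> and sequences \<open>G\<close>, \<open>X\<close>. Pushability of \<open>F\<close> in both arguments gives
  \<open>limsup (F\<^sub>\<alpha> (G \<alpha>) (X \<alpha>)) \<sqsubseteq> T (limsup X)\<close> with \<open>T = F\<^sub>\<lambda> (limsup G)\<close> (or \<open>F\<^sub>\<gamma> (limsup G)\<close>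
  for the constant index). By transfinite induction on \<open>\<beta>\<close>, \<open>limsup\<^sub>\<alpha> \<nu>\<^sup>\<beta> (F\<^sub>\<alpha> (G \<alpha>)) \<sqsubseteq> \<nu>\<^sup>\<beta> T\<close>:
  successor steps use this inequality with \<open>X\<close> the previous iterates and monotonicity of \<open>T\<close>;
  at limits, the iterates from \<open>\<top>\<close> of a monotone map form a descending chain, so the
  \<open>limsup\<close> defining \<open>\<nu>\<^sup>\<beta>\<close> is just an infimum, and infima commute with the bound.
\<close>

lemma the_predecessor:
  fixes a b :: "'o::wellorder"
  assumes "b < a" "\<not> (\<exists>c. b < c \<and> c < a)"
  shows "(THE b. b < a \<and> \<not> (\<exists>c. b < c \<and> c < a)) = b"
proof (rule the_equality)
  fix x assume "x < a \<and> \<not> (\<exists>c. x < c \<and> c < a)"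
  with assms show "x = b" by (metis linorder_cases)
qed (use assms in blast)

lemma iter_unfold:
  "iter f g (a::'o::wellorder) = (if \<not> (\<exists>b. b < a) then g
       else if (\<exists>b. b < a \<and> \<not> (\<exists>c. b < c \<and> c < a))
         then f (iter f g (THE b. b < a \<and> \<not> (\<exists>c. b < c \<and> c < a)))
       else limsup_at (iter f g) a)"
proof -
  let ?R = "{(x::'o, y). x < y}"
  have unfold: "iter f g a = (if \<not> (\<exists>b. b < a) then g
       else if (\<exists>b. b < a \<and> \<not> (\<exists>c. b < c \<and> c < a))
         then f (cut (iter f g) ?R a (THE b. b < a \<and> \<not> (\<exists>c. b < c \<and> c < a)))
       else limsup_at (cut (iter f g) ?R a) a)"
    unfolding iter_def by (rule wfrec[OF wf])
  have "limsup_at (cut (iter f g) ?R a) a = limsup_at (iter f g) a"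
    unfolding limsup_at_def by (intro INF_cong SUP_cong refl) (auto simp: cut_apply)
  moreover have "cut (iter f g) ?R a (THE b. b < a \<and> \<not> (\<exists>c. b < c \<and> c < a))
      = iter f g (THE b. b < a \<and> \<not> (\<exists>c. b < c \<and> c < a))"
    if "b < a" "\<not> (\<exists>c. b < c \<and> c < a)" for b
    using that the_predecessor[OF that] by (simp add: cut_apply)
  ultimately show ?thesis
    by (subst unfold) auto
qed

lemma iter_zero: "\<not> (\<exists>b. b < (a::'o::wellorder)) \<Longrightarrow> iter f g a = g"
  by (subst iter_unfold) simp

lemma iter_succ:
  assumes "b < (a::'o::wellorder)" "\<not> (\<exists>c. b < c \<and> c < a)"
  shows "iter f g a = f (iter f g b)"
  using assms the_predecessor[OF assms] by (subst iter_unfold) auto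

lemma iter_limit: "is_limit (a::'o::wellorder) \<Longrightarrow> iter f g a = limsup_at (iter f g) a"
  by (subst iter_unfold) (auto simp: is_limit_def)

lemma ordinal_cases:
  fixes a :: "'o::wellorder"
  obtains (zero) "\<not> (\<exists>b. b < a)"
    | (succ) b where "b < a" "\<not> (\<exists>c. b < c \<and> c < a)"
    | (limit) "is_limit a"
  unfolding is_limit_def by blast

lemma is_limit_obtain_succ:
  fixes c lam :: "'o::wellorder"
  assumes "is_limit lam" "c < lam"
  obtains s where "c < s" "s < lam" "\<not> (\<exists>e. c < e \<and> e < s)"
proof
  obtain d where d: "c < d" "d < lam" using assms unfolding is_limit_def by blast
  show "c < (LEAST x. c < x)" using d by (metis LeastI)
  show "(LEAST x. c < x) < lam" using d by (meson Least_le le_less_trans)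
  show "\<not> (\<exists>e. c < e \<and> e < (LEAST x. c < x))" using not_less_Least by blast
qed

lemma limsup_at_mono:
  "(\<And>a. f a \<le> g a) \<Longrightarrow> limsup_at f lam \<le> limsup_at g lam"
  unfolding limsup_at_def by (intro INF_superset_mono SUP_mono') auto

lemma limsup_at_antimono:
  fixes h :: "'o::wellorder \<Rightarrow> 'a::complete_lattice"
  assumes "\<And>b c. b \<le> c \<Longrightarrow> c < lam \<Longrightarrow> h c \<le> h b"
  shows "limsup_at h lam = (INF b\<in>{..<lam}. h b)"
  unfolding limsup_at_def
proof (intro INF_cong refl)
  fix a0 assume "a0 \<in> {..<lam}"
  then show "(SUP b\<in>{a0..<lam}. h b) = h a0"
    using assms by (intro antisym SUP_least SUP_upper) auto
qed

lemma iter_top_post_fixpoint: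
  fixes f :: "'a::complete_lattice \<Rightarrow> 'a"
  assumes "mono f"
    and antitone: "\<And>b c. b \<le> c \<Longrightarrow> c \<le> p \<Longrightarrow> iter f top c \<le> iter f top (b::'o::wellorder)"
  shows "f (iter f top p) \<le> iter f top p"
proof (cases p rule: ordinal_cases)
  case zero
  then show ?thesis by (simp add: iter_zero)
next
  case (succ q)
  then have "iter f top p \<le> iter f top q" using antitone by simp
  then show ?thesis using succ \<open>mono f\<close> by (simp add: iter_succ monoD)
next
  case limit
  have "iter f top p = (INF c\<in>{..<p}. iter f top c)"
    using limit antitone by (simp add: iter_limit limsup_at_antimono)
  moreover have "f (iter f top p) \<le> iter f top c" if "c < p" for c
  proof -
    obtain s where s: "c < s" "s < p" "\<not> (\<exists>e. c < e \<and> e < s)"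
      using is_limit_obtain_succ[OF limit \<open>c < p\<close>] .
    have "f (iter f top p) \<le> f (iter f top c)"
      using antitone \<open>c < p\<close> \<open>mono f\<close> by (simp add: monoD)
    also have "\<dots> = iter f top s" using s by (simp add: iter_succ)
    also have "\<dots> \<le> iter f top c" using antitone s by simp
    finally show ?thesis .
  qed
  ultimately show ?thesis by (simp add: le_INF_iff)
qed

lemma iter_top_antimono:
  fixes f :: "'a::complete_lattice \<Rightarrow> 'a"
  assumes "mono f"
  shows "b \<le> (a::'o::wellorder) \<Longrightarrow> iter f top a \<le> iter f top b"
proof (induction a arbitrary: b rule: less_induct)
  case (less a)
  show ?case
  proof (cases "b = a")
    case False
    with less.prems have "b < a" by simp
    show ?thesis
    proof (cases a rule: ordinal_cases)
      case zero
      then show ?thesis using \<open>b < a\<close> by blast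
    next
      case (succ p)
      then have "b \<le> p" using \<open>b < a\<close> by (metis le_less not_le)
      have "iter f top a = f (iter f top p)" using succ by (simp add: iter_succ)
      also have "\<dots> \<le> iter f top p"
        using less.IH succ by (intro iter_top_post_fixpoint[OF \<open>mono f\<close>]) auto
      also have "\<dots> \<le> iter f top b" using less.IH succ \<open>b \<le> p\<close> by simp
      finally show ?thesis .
    next
      case limit
      then have "iter f top a = (INF c\<in>{..<a}. iter f top c)"
        using less.IH by (simp add: iter_limit limsup_at_antimono)
      then show ?thesis using \<open>b < a\<close> by (metis INF_lower lessThan_iff)
    qed
  qed simp
qed

lemma iter_top_limit:
  "mono f \<Longrightarrow> is_limit (a::'o::wellorder) \<Longrightarrow> iter f top a = (INF c\<in>{..<a}. iter f top c)"
  by (simp add: iter_limit limsup_at_antimono iter_top_antimono)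

lemma limsup_at_nu_iter_le:
  fixes Fs :: "'o::wellorder \<Rightarrow> 'a::complete_lattice \<Rightarrow> 'a" and T :: "'a \<Rightarrow> 'a"
  assumes mono_Fs: "\<And>a. mono (Fs a)" and "mono T"
    and push: "\<And>X. limsup_at (\<lambda>a. Fs a (X a)) lam \<le> T (limsup_at X lam)"
  shows "limsup_at (\<lambda>a. nu_iter \<beta> (Fs a)) lam \<le> nu_iter (\<beta>::'o) T"
  unfolding nu_iter_def
proof (induction \<beta> rule: less_induct)
  case (less \<beta>)
  show ?case
  proof (cases \<beta> rule: ordinal_cases)
    case zero
    then show ?thesis by (simp add: iter_zero)
  next
    case (succ p)
    have "limsup_at (\<lambda>a. iter (Fs a) top \<beta>) lam = limsup_at (\<lambda>a. Fs a (iter (Fs a) top p)) lam"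
      using succ by (simp add: iter_succ)
    also have "\<dots> \<le> T (limsup_at (\<lambda>a. iter (Fs a) top p) lam)" by (rule push)
    also have "\<dots> \<le> T (iter T top p)" using less.IH succ \<open>mono T\<close> by (simp add: monoD)
    also have "\<dots> = iter T top \<beta>" using succ by (simp add: iter_succ)
    finally show ?thesis .
  next
    case limit
    have "limsup_at (\<lambda>a. iter (Fs a) top \<beta>) lam \<le> iter T top c" if "c < \<beta>" for c
    proof -
      have "limsup_at (\<lambda>a. iter (Fs a) top \<beta>) lam \<le> limsup_at (\<lambda>a. iter (Fs a) top c) lam"
        using that mono_Fs by (intro limsup_at_mono iter_top_antimono) auto
      also have "\<dots> \<le> iter T top c" using less.IH that by simp
      finally show ?thesis .
    qed
    then show ?thesis using limit \<open>mono T\<close> by (simp add: iter_top_limit le_INF_iff)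
  qed
qed

lemma limsup_at_Pair:
  "limsup_at (\<lambda>a. (G a, X a)) lam = (limsup_at G lam, limsup_at X lam)"
  by (simp add: limsup_at_def INF_Pair SUP_Pair)

lemma limsup_pushable_curriedD:
  assumes "limsup_pushable (\<lambda>a (GX :: 'k::complete_lattice \<times> 'l::complete_lattice). F a (fst GX) (snd GX) :: 'm::complete_lattice)"
    and "is_limit (lam::'o::wellorder)"
  shows "limsup_at (\<lambda>a. F c (G a) (X a)) lam \<le> F c (limsup_at G lam) (limsup_at X lam)"
    and "limsup_at (\<lambda>a. F a (G a) (X a)) lam \<le> F lam (limsup_at G lam) (limsup_at X lam)"
proof -
  have "limsup_at (\<lambda>a. F c (G a) (X a)) lam \<le> F c (limsup_at G lam) (limsup_at X lam) \<and>
      limsup_at (\<lambda>a. F a (G a) (X a)) lam \<le> F lam (limsup_at G lam) (limsup_at X lam)"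
    using assms unfolding limsup_pushable_def
    by (elim allE[where x = "\<lambda>a. (G a, X a)"] allE[where x = lam]) (simp add: limsup_at_Pair)
  then show "limsup_at (\<lambda>a. F c (G a) (X a)) lam \<le> F c (limsup_at G lam) (limsup_at X lam)"
    and "limsup_at (\<lambda>a. F a (G a) (X a)) lam \<le> F lam (limsup_at G lam) (limsup_at X lam)"
    by simp_all
qed

theorem lemma4p10:
  fixes F :: "'o::wellorder \<Rightarrow> 'k::complete_lattice \<Rightarrow> 'l::complete_lattice \<Rightarrow> 'l"
    and beta :: 'o
  assumes mono: "\<And>a G. mono (F a G)"
    and push: "limsup_pushable (\<lambda>a (GX :: 'k \<times> 'l). F a (fst GX) (snd GX))"
  shows "limsup_pushable (\<lambda>a G. nu_iter beta (F a G))"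
  unfolding limsup_pushable_def
proof (intro allI impI conjI)
  fix G :: "'o \<Rightarrow> 'k" and lam c :: 'o
  assume "is_limit lam"
  show "limsup_at (\<lambda>a. nu_iter beta (F c (G a))) lam \<le> nu_iter beta (F c (limsup_at G lam))"
    by (rule limsup_at_nu_iter_le[OF mono mono limsup_pushable_curriedD(1)[OF push \<open>is_limit lam\<close>]])
  show "limsup_at (\<lambda>a. nu_iter beta (F a (G a))) lam \<le> nu_iter beta (F lam (limsup_at G lam))"
    by (rule limsup_at_nu_iter_le[OF mono mono limsup_pushable_curriedD(2)[OF push \<open>is_limit lam\<close>]])
qed

end
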